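(* Let $R$ be a binary relation on $U$. Then $\wp(U)^{\vartriangle}$ is spatial and completely distributive if and only if for every $x\in U$, $R(x)$ is a union of sets $R(y)$ ($y\in U$) each of which is completely join-prime in $\wp(U)^{\vartriangle}$.
   Context: Let $U$ be a set and $R\subseteq U\times U$ a binary relation. For $x\in U$, $R(x)=\{y\in U\mid (x,y)\in R\}$ and $\breve R(x)=\{y\in U\mid (y,x)\in R\}$. For $X\subseteq U$, $X^{\vartriangle}=\{x\in U\mid \breve R(x)\cap X\neq\emptyset\}$ (so $\{x\}^{\vartriangle}=R(x)$), and $\wp(U)^{\vartriangle}=\{X^{\vartriangle}\mid X\subseteq U\}$, a complete lattice under $\subseteq$ in which joins are unions. An element $p$ of a complete lattice $L$ is completely join-prime if $p\le\bigvee Y$ implies $p\le y$ for some $y\in Y$; it is completely join-irreducible if $p=\bigvee Y$ implies $p\in Y$. $L$ is spatial if each element is the join of the completely join-irreducible elements below it, and completely distributive if $\bigwedge_{i\in I}\bigvee_{j\in J}x_{i,j}=\bigvee_{f\colon I\to J}\bigwedge_{i\in I}x_{i,f(i)}$ for all doubly indexed families. *)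

theory Defs
  imports Main
begin

definition rimg :: "'a set \<Rightarrow> ('a \<times> 'a) set \<Rightarrow> 'a \<Rightarrow> 'a set" where
  "rimg U R x = {y \<in> U. (x, y) \<in> R}"

definition tri :: "'a set \<Rightarrow> ('a \<times> 'a) set \<Rightarrow> 'a set \<Rightarrow> 'a set" where
  "tri U R X = {x \<in> U. \<exists>y \<in> X. (y, x) \<in> R}"

definition tri_lattice :: "'a set \<Rightarrow> ('a \<times> 'a) set \<Rightarrow> 'a set set" where
  "tri_lattice U R = {tri U R X | X. X \<subseteq> U}"

definition is_lub :: "'a set set \<Rightarrow> 'a set set \<Rightarrow> 'a set \<Rightarrow> bool" where
  "is_lub L Y s \<longleftrightarrow> s \<in> L \<and> (\<forall>y\<in>Y. y \<subseteq> s) \<and> (\<forall>z\<in>L. (\<forall>y\<in>Y. y \<subseteq> z) \<longrightarrow> s \<subseteq> z)"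

definition is_glb :: "'a set set \<Rightarrow> 'a set set \<Rightarrow> 'a set \<Rightarrow> bool" where
  "is_glb L Y s \<longleftrightarrow> s \<in> L \<and> (\<forall>y\<in>Y. s \<subseteq> y) \<and> (\<forall>z\<in>L. (\<forall>y\<in>Y. z \<subseteq> y) \<longrightarrow> z \<subseteq> s)"

definition Ljoin :: "'a set set \<Rightarrow> 'a set set \<Rightarrow> 'a set" where
  "Ljoin L Y = (THE s. is_lub L Y s)"

definition Lmeet :: "'a set set \<Rightarrow> 'a set set \<Rightarrow> 'a set" where
  "Lmeet L Y = (THE s. is_glb L Y s)"

definition completely_join_prime :: "'a set set \<Rightarrow> 'a set \<Rightarrow> bool" where
  "completely_join_prime L p \<longleftrightarrow>
     p \<in> L \<and> (\<forall>Y. Y \<subseteq> L \<longrightarrow> p \<subseteq> Ljoin L Y \<longrightarrow> (\<exists>y\<in>Y. p \<subseteq> y))"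

definition completely_join_irreducible :: "'a set set \<Rightarrow> 'a set \<Rightarrow> bool" where
  "completely_join_irreducible L p \<longleftrightarrow>
     p \<in> L \<and> (\<forall>Y. Y \<subseteq> L \<longrightarrow> p = Ljoin L Y \<longrightarrow> p \<in> Y)"

definition spatial :: "'a set set \<Rightarrow> bool" where
  "spatial L \<longleftrightarrow>
     (\<forall>x\<in>L. x = Ljoin L {p. completely_join_irreducible L p \<and> p \<subseteq> x})"

text \<open>Complete distributivity. Index sets I, J are subsets of a fixed type
 ('a set set, whose cardinality exceeds that of L); f ranges over maps I \<rightarrow> J.\<close>
definition completely_distributive :: "'a set set \<Rightarrow> bool" where
  "completely_distributive L \<longleftrightarrow>
     (\<forall>(I :: 'a set set set) (J :: 'a set set set) (x :: 'a set set \<Rightarrow> 'a set set \<Rightarrow> 'a set).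
        (\<forall>i\<in>I. \<forall>j\<in>J. x i j \<in> L) \<longrightarrow>
        Lmeet L {Ljoin L {x i j | j. j \<in> J} | i. i \<in> I}
        = Ljoin L {Lmeet L {x i (f i) | i. i \<in> I} | f. (\<forall>i\<in>I. f i \<in> J)})"

end

theory Submission
  imports Defs
begin

text \<open>The family \<open>\<wp>(U)\<^sup>\<triangle>\<close> consists exactly of the unions of sets \<open>R(x)\<close>, so it is closed
  under arbitrary unions and its joins are unions. For any union-closed family, being spatial
  and completely distributive amounts to every element being the union of the completely
  join-prime elements below it: primes are always irreducible, complete distributivity makes
  irreducibles prime, and conversely join-dense primes yield distributivity by choosing, for a
  prime below a meet of joins, one entry above it in every row. Finally a completely
  join-prime union of sets \<open>R(y)\<close> must be one of them, so this density condition only has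
  to be checked on the generators \<open>R(x)\<close>.\<close>

definition union_closed :: "'a set set \<Rightarrow> bool" where
  "union_closed L \<longleftrightarrow> (\<forall>Y\<subseteq>L. \<Union>Y \<in> L)"

definition prime_generated :: "'a set set \<Rightarrow> bool" where
  "prime_generated L \<longleftrightarrow> (\<forall>z\<in>L. z = \<Union>{p. completely_join_prime L p \<and> p \<subseteq> z})"

lemma union_closedD: "union_closed L \<Longrightarrow> Y \<subseteq> L \<Longrightarrow> \<Union>Y \<in> L"
  unfolding union_closed_def by blast

lemma Ljoin_union_closed:
  assumes "union_closed L" "Y \<subseteq> L"
  shows "Ljoin L Y = \<Union>Y"
  unfolding Ljoin_def
proof (rule the_equality)
  have "\<Union>Y \<in> L" using union_closedD[OF assms] .
  then show "is_lub L Y (\<Union>Y)" by (auto simp: is_lub_def)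
  fix s assume "is_lub L Y s"
  with \<open>\<Union>Y \<in> L\<close> show "s = \<Union>Y" unfolding is_lub_def by blast
qed

lemma Lmeet_union_closed:
  assumes "union_closed L"
  shows "Lmeet L Y = \<Union>{z\<in>L. \<forall>y\<in>Y. z \<subseteq> y}"
  unfolding Lmeet_def
proof (rule the_equality)
  let ?m = "\<Union>{z\<in>L. \<forall>y\<in>Y. z \<subseteq> y}"
  have "?m \<in> L" by (rule union_closedD[OF assms]) blast
  moreover have "\<forall>y\<in>Y. ?m \<subseteq> y" by blast
  moreover have "\<forall>z\<in>L. (\<forall>y\<in>Y. z \<subseteq> y) \<longrightarrow> z \<subseteq> ?m" by blast
  ultimately show "is_glb L Y ?m" unfolding is_glb_def by blast
  fix s assume "is_glb L Y s"
  then have "s \<in> L" "\<forall>y\<in>Y. s \<subseteq> y" "\<forall>z\<in>L. (\<forall>y\<in>Y. z \<subseteq> y) \<longrightarrow> z \<subseteq> s"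
    unfolding is_glb_def by blast+
  with \<open>?m \<in> L\<close> show "s = ?m" by blast
qed

lemma Lmeet_in_union_closed:
  assumes "union_closed L"
  shows "Lmeet L Y \<in> L"
  unfolding Lmeet_union_closed[OF assms] by (rule union_closedD[OF assms]) blast

lemma Lmeet_lower_union_closed:
  assumes "union_closed L" "y \<in> Y"
  shows "Lmeet L Y \<subseteq> y"
  using assms(2) unfolding Lmeet_union_closed[OF assms(1)] by blast

lemma Lmeet_greatest_union_closed:
  assumes "union_closed L" "z \<in> L" "\<And>y. y \<in> Y \<Longrightarrow> z \<subseteq> y"
  shows "z \<subseteq> Lmeet L Y"
  using assms(2,3) unfolding Lmeet_union_closed[OF assms(1)] by blast

lemma completely_join_prime_in: "completely_join_prime L p \<Longrightarrow> p \<in> L"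
  unfolding completely_join_prime_def by blast

lemma completely_join_prime_union_closedD:
  assumes "union_closed L" "completely_join_prime L p" "Y \<subseteq> L" "p \<subseteq> \<Union>Y"
  obtains y where "y \<in> Y" "p \<subseteq> y"
  using assms Ljoin_union_closed[OF assms(1,3)] unfolding completely_join_prime_def by metis

lemma prime_generatedD:
  "prime_generated L \<Longrightarrow> z \<in> L \<Longrightarrow> z = \<Union>{p. completely_join_prime L p \<and> p \<subseteq> z}"
  unfolding prime_generated_def by (rule bspec)

lemma prime_generatedE:
  assumes "prime_generated L" "z \<in> L" "a \<in> z"
  obtains p where "completely_join_prime L p" "p \<subseteq> z" "a \<in> p"
proof -
  from assms(3) have "a \<in> \<Union>{p. completely_join_prime L p \<and> p \<subseteq> z}"
    by (subst (asm) prime_generatedD[OF assms(1,2)])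
  with that show thesis by blast
qed

lemma completely_distributive_union_closed_iff:
  assumes L: "union_closed L"
  shows "completely_distributive L \<longleftrightarrow>
    (\<forall>(I :: 'a set set set) (J :: 'a set set set) (x :: 'a set set \<Rightarrow> 'a set set \<Rightarrow> 'a set).
        (\<forall>i\<in>I. \<forall>j\<in>J. x i j \<in> L) \<longrightarrow>
        Lmeet L {\<Union>{x i j | j. j \<in> J} | i. i \<in> I}
        = \<Union>{Lmeet L {x i (f i) | i. i \<in> I} | f. \<forall>i\<in>I. f i \<in> J})"
proof -
  have rewr: "{Ljoin L {x i j | j. j \<in> J} | i. i \<in> I} = {\<Union>{x i j | j. j \<in> J} | i. i \<in> I}"
    "Ljoin L {Lmeet L {x i (f i) | i. i \<in> I} | f. \<forall>i\<in>I. f i \<in> J}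
         = \<Union>{Lmeet L {x i (f i) | i. i \<in> I} | f. \<forall>i\<in>I. f i \<in> J}"
    if xL: "\<forall>i\<in>I. \<forall>j\<in>J. x i j \<in> L"
    for I J :: "'a set set set" and x :: "'a set set \<Rightarrow> 'a set set \<Rightarrow> 'a set"
  proof -
    have "Ljoin L {x i j | j. j \<in> J} = \<Union>{x i j | j. j \<in> J}" if "i \<in> I" for i
      using xL that by (intro Ljoin_union_closed[OF L]) blast
    then show "{Ljoin L {x i j | j. j \<in> J} | i. i \<in> I} = {\<Union>{x i j | j. j \<in> J} | i. i \<in> I}"
      unfolding setcompr_eq_image by (rule image_cong[OF refl]) simp
    show "Ljoin L {Lmeet L {x i (f i) | i. i \<in> I} | f. \<forall>i\<in>I. f i \<in> J}
         = \<Union>{Lmeet L {x i (f i) | i. i \<in> I} | f. \<forall>i\<in>I. f i \<in> J}"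
      using Lmeet_in_union_closed[OF L] by (intro Ljoin_union_closed[OF L]) blast
  qed
  show ?thesis
    unfolding completely_distributive_def
    by (intro iff_allI imp_cong[OF refl]) (simp only: rewr)
qed

lemma completely_join_prime_imp_irreducible:
  assumes L: "union_closed L" and p: "completely_join_prime L p"
  shows "completely_join_irreducible L p"
  unfolding completely_join_irreducible_def
proof (intro conjI allI impI)
  show "p \<in> L" using completely_join_prime_in[OF p] .
  fix Y assume Y: "Y \<subseteq> L" and "p = Ljoin L Y"
  then have pY: "p = \<Union>Y" using Ljoin_union_closed[OF L Y] by simp
  from Y pY obtain y where y: "y \<in> Y" "p \<subseteq> y"
    by (elim completely_join_prime_union_closedD[OF L p]) auto
  moreover have "y \<subseteq> p" using pY y(1) by blast
  ultimately show "p \<in> Y" by (metis subset_antisym)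
qed

lemma completely_join_irreducible_imp_prime:
  assumes L: "union_closed L" and CD: "completely_distributive L"
    and p: "completely_join_irreducible L p"
  shows "completely_join_prime L p"
  unfolding completely_join_prime_def
proof (intro conjI allI impI)
  show pL: "p \<in> L" using p unfolding completely_join_irreducible_def by blast
  fix Y assume YL: "Y \<subseteq> L" and "p \<subseteq> Ljoin L Y"
  then have pY: "p \<subseteq> \<Union>Y" using Ljoin_union_closed[OF L YL] by simp
  \<comment> \<open>Distributivity for the matrix with rows \<open>p, p, \<dots>\<close> and \<open>Y\<close> (rows indexed by \<open>{}\<close> and
     \<open>UNIV\<close>, columns by the singletons of \<open>Y\<close>) writes \<open>p\<close> as the join of the meets \<open>p \<sqinter> y\<close>.\<close>
  define I :: "'a set set set" where "I = {{}, UNIV}"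
  define J :: "'a set set set" where "J = (\<lambda>y. {y}) ` Y"
  define x :: "'a set set \<Rightarrow> 'a set set \<Rightarrow> 'a set" where
    "x i j = (if i = {} then p else \<Union>j)" for i j
  define S where "S = {Lmeet L {x i (f i) | i. i \<in> I} | f. \<forall>i\<in>I. f i \<in> J}"
  have xL: "\<forall>i\<in>I. \<forall>j\<in>J. x i j \<in> L" using pL YL by (auto simp: J_def x_def)
  have "Lmeet L {\<Union>{x i j | j. j \<in> J} | i. i \<in> I} = p"
  proof (rule antisym)
    have "Lmeet L {\<Union>{x i j | j. j \<in> J} | i. i \<in> I} \<subseteq> \<Union>{x {} j | j. j \<in> J}"
      by (rule Lmeet_lower_union_closed[OF L]) (auto simp: I_def)
    also have "\<dots> \<subseteq> p" by (auto simp: x_def)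
    finally show "Lmeet L {\<Union>{x i j | j. j \<in> J} | i. i \<in> I} \<subseteq> p" .
    have "p \<subseteq> \<Union>{x i j | j. j \<in> J}" for i
    proof
      fix a assume "a \<in> p"
      with pY obtain y where "y \<in> Y" "a \<in> y" by blast
      then have "x i {y} \<in> {x i j | j. j \<in> J}" "a \<in> x i {y}"
        using \<open>a \<in> p\<close> by (auto simp: J_def x_def)
      then show "a \<in> \<Union>{x i j | j. j \<in> J}" by blast
    qed
    then show "p \<subseteq> Lmeet L {\<Union>{x i j | j. j \<in> J} | i. i \<in> I}"
      by (intro Lmeet_greatest_union_closed[OF L pL]) blast
  qed
  moreover have "Lmeet L {\<Union>{x i j | j. j \<in> J} | i. i \<in> I} = \<Union>S"
    unfolding S_def
    using xL by (intro CD[unfolded completely_distributive_union_closed_iff[OF L], rule_format]) blast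
  moreover have SL: "S \<subseteq> L" unfolding S_def using Lmeet_in_union_closed[OF L] by blast
  ultimately have "p = Ljoin L S" using Ljoin_union_closed[OF L SL] by simp
  with SL p have "p \<in> S" unfolding completely_join_irreducible_def by blast
  then obtain f where f: "\<forall>i\<in>I. f i \<in> J" and pf: "p = Lmeet L {x i (f i) | i. i \<in> I}"
    unfolding S_def by blast
  then obtain y where y: "y \<in> Y" "f UNIV = {y}" by (auto simp: I_def J_def)
  have "p \<subseteq> x UNIV (f UNIV)"
    unfolding pf by (rule Lmeet_lower_union_closed[OF L]) (auto simp: I_def)
  with y show "\<exists>y\<in>Y. p \<subseteq> y" by (auto simp: x_def)
qed

lemma spatial_if_prime_generated:
  assumes L: "union_closed L" and P: "prime_generated L"
  shows "spatial L"
  unfolding spatial_def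
proof
  fix z assume "z \<in> L"
  let ?Q = "{p. completely_join_irreducible L p \<and> p \<subseteq> z}"
  have "z = \<Union>{p. completely_join_prime L p \<and> p \<subseteq> z}"
    using P \<open>z \<in> L\<close> by (rule prime_generatedD)
  also have "\<dots> \<subseteq> \<Union>?Q" using completely_join_prime_imp_irreducible[OF L] by blast
  finally have "z = \<Union>?Q" by blast
  also have "\<dots> = Ljoin L ?Q"
    by (rule Ljoin_union_closed[OF L, symmetric]) (auto simp: completely_join_irreducible_def)
  finally show "z = Ljoin L ?Q" .
qed

lemma Union_Lmeet_subset_Lmeet_Union:
  assumes L: "union_closed L"
  shows "\<Union>{Lmeet L {x i (f i) | i. i \<in> I} | f. \<forall>i\<in>I. f i \<in> J}
    \<subseteq> Lmeet L {\<Union>{x i j | j. j \<in> J} | i. i \<in> I}"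
proof
  fix a assume "a \<in> \<Union>{Lmeet L {x i (f i) | i. i \<in> I} | f. \<forall>i\<in>I. f i \<in> J}"
  then obtain f where f: "\<forall>i\<in>I. f i \<in> J" and a: "a \<in> Lmeet L {x i (f i) | i. i \<in> I}"
    by blast
  have "Lmeet L {x i (f i) | i. i \<in> I} \<subseteq> Lmeet L {\<Union>{x i j | j. j \<in> J} | i. i \<in> I}"
  proof (rule Lmeet_greatest_union_closed[OF L Lmeet_in_union_closed[OF L]])
    fix y assume "y \<in> {\<Union>{x i j | j. j \<in> J} | i. i \<in> I}"
    then obtain i where i: "i \<in> I" and y: "y = \<Union>{x i j | j. j \<in> J}" by blast
    have "Lmeet L {x i (f i) | i. i \<in> I} \<subseteq> x i (f i)"
      using i by (intro Lmeet_lower_union_closed[OF L]) blast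
    also have "\<dots> \<subseteq> y" using f i y by blast
    finally show "Lmeet L {x i (f i) | i. i \<in> I} \<subseteq> y" .
  qed
  with a show "a \<in> Lmeet L {\<Union>{x i j | j. j \<in> J} | i. i \<in> I}" by blast
qed

lemma completely_distributive_if_prime_generated:
  assumes L: "union_closed L" and P: "prime_generated L"
  shows "completely_distributive L"
  unfolding completely_distributive_union_closed_iff[OF L]
proof (intro allI impI antisym)
  fix I J :: "'a set set set" and x :: "'a set set \<Rightarrow> 'a set set \<Rightarrow> 'a set"
  assume xL: "\<forall>i\<in>I. \<forall>j\<in>J. x i j \<in> L"
  define M where "M = Lmeet L {\<Union>{x i j | j. j \<in> J} | i. i \<in> I}"
  show "M \<subseteq> \<Union>{Lmeet L {x i (f i) | i. i \<in> I} | f. \<forall>i\<in>I. f i \<in> J}"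
  proof
    fix a assume "a \<in> M"
    moreover have "M \<in> L" unfolding M_def by (rule Lmeet_in_union_closed[OF L])
    ultimately obtain p where p: "completely_join_prime L p" "p \<subseteq> M" "a \<in> p"
      using prime_generatedE[OF P] by blast
    have "\<exists>j. j \<in> J \<and> p \<subseteq> x i j" if i: "i \<in> I" for i
    proof -
      have "{x i j | j. j \<in> J} \<subseteq> L" using xL i by blast
      moreover have "M \<subseteq> \<Union>{x i j | j. j \<in> J}"
        unfolding M_def using i by (intro Lmeet_lower_union_closed[OF L]) blast
      with p(2) have "p \<subseteq> \<Union>{x i j | j. j \<in> J}" by blast
      ultimately obtain y where "y \<in> {x i j | j. j \<in> J}" "p \<subseteq> y"
        by (rule completely_join_prime_union_closedD[OF L p(1)])
      then show ?thesis by blast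
    qed
    then obtain f where f: "\<forall>i\<in>I. f i \<in> J \<and> p \<subseteq> x i (f i)" by metis
    have "p \<subseteq> Lmeet L {x i (f i) | i. i \<in> I}"
      using f by (intro Lmeet_greatest_union_closed[OF L completely_join_prime_in[OF p(1)]]) blast
    with f p(3) show "a \<in> \<Union>{Lmeet L {x i (f i) | i. i \<in> I} | f. \<forall>i\<in>I. f i \<in> J}" by blast
  qed
  show "\<Union>{Lmeet L {x i (f i) | i. i \<in> I} | f. \<forall>i\<in>I. f i \<in> J} \<subseteq> M"
    unfolding M_def by (rule Union_Lmeet_subset_Lmeet_Union[OF L])
qed

lemma prime_generated_if_spatial_distributive:
  assumes L: "union_closed L" and "spatial L" and CD: "completely_distributive L"
  shows "prime_generated L"
  unfolding prime_generated_def
proof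
  fix z assume "z \<in> L"
  let ?Q = "{p. completely_join_irreducible L p \<and> p \<subseteq> z}"
  have "z = Ljoin L ?Q" using \<open>spatial L\<close> \<open>z \<in> L\<close> unfolding spatial_def by blast
  also have "\<dots> = \<Union>?Q"
    by (rule Ljoin_union_closed[OF L]) (auto simp: completely_join_irreducible_def)
  also have "\<dots> \<subseteq> \<Union>{p. completely_join_prime L p \<and> p \<subseteq> z}"
    using completely_join_irreducible_imp_prime[OF L CD] by blast
  finally show "z = \<Union>{p. completely_join_prime L p \<and> p \<subseteq> z}" by blast
qed

lemma spatial_distributive_iff_prime_generated:
  assumes "union_closed L"
  shows "spatial L \<and> completely_distributive L \<longleftrightarrow> prime_generated L"
  using assms spatial_if_prime_generated completely_distributive_if_prime_generated
    prime_generated_if_spatial_distributive by blast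

lemma union_closed_Union_Pow: "union_closed (Union ` Pow B)"
  unfolding union_closed_def
proof (intro allI impI)
  fix Y assume "Y \<subseteq> Union ` Pow B"
  then have "\<Union>Y = \<Union>{b\<in>B. \<exists>y\<in>Y. b \<subseteq> y}" by blast
  then show "\<Union>Y \<in> Union ` Pow B" by blast
qed

lemma subset_Union_Pow: "B \<subseteq> Union ` Pow B"
proof
  fix b assume "b \<in> B"
  then show "b \<in> Union ` Pow B" by (intro image_eqI[of _ _ "{b}"]) auto
qed

lemma completely_join_prime_Union_Pow_mem:
  assumes "completely_join_prime (Union ` Pow B) p"
  shows "p \<in> B"
proof -
  from completely_join_prime_in[OF assms] obtain Y where Y: "Y \<subseteq> B" "p = \<Union>Y" by blast
  have "Y \<subseteq> Union ` Pow B" using Y(1) subset_Union_Pow by blast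
  moreover have "p \<subseteq> \<Union>Y" using Y(2) by simp
  ultimately obtain y where y: "y \<in> Y" "p \<subseteq> y"
    by (rule completely_join_prime_union_closedD[OF union_closed_Union_Pow assms])
  moreover have "y \<subseteq> p" using Y(2) y(1) by blast
  ultimately show "p \<in> B" using Y(1) by (metis subset_antisym subsetD)
qed

lemma prime_generated_Union_Pow_iff:
  "prime_generated (Union ` Pow B) \<longleftrightarrow>
     (\<forall>b\<in>B. b = \<Union>{c\<in>B. c \<subseteq> b \<and> completely_join_prime (Union ` Pow B) c})"
  (is "_ \<longleftrightarrow> (\<forall>b\<in>B. b = \<Union>(?P b))")
proof
  assume P: "prime_generated (Union ` Pow B)"
  show "\<forall>b\<in>B. b = \<Union>(?P b)"
  proof
    fix b assume "b \<in> B"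
    then have "b \<in> Union ` Pow B" using subset_Union_Pow by blast
    with P have "b = \<Union>{p. completely_join_prime (Union ` Pow B) p \<and> p \<subseteq> b}"
      by (rule prime_generatedD)
    also have "{p. completely_join_prime (Union ` Pow B) p \<and> p \<subseteq> b} = ?P b"
      using completely_join_prime_Union_Pow_mem by blast
    finally show "b = \<Union>(?P b)" .
  qed
next
  assume H: "\<forall>b\<in>B. b = \<Union>(?P b)"
  show "prime_generated (Union ` Pow B)"
    unfolding prime_generated_def
  proof
    fix z assume "z \<in> Union ` Pow B"
    then obtain Y where Y: "Y \<subseteq> B" "z = \<Union>Y" by blast
    have "z \<subseteq> \<Union>{p. completely_join_prime (Union ` Pow B) p \<and> p \<subseteq> z}"
    proof
      fix a assume "a \<in> z"
      with Y obtain b where b: "b \<in> Y" "a \<in> b" by blast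
      with Y(1) H have "a \<in> \<Union>(?P b)" by blast
      then obtain c where "c \<in> ?P b" "a \<in> c" by blast
      with b Y(2) show "a \<in> \<Union>{p. completely_join_prime (Union ` Pow B) p \<and> p \<subseteq> z}" by blast
    qed
    then show "z = \<Union>{p. completely_join_prime (Union ` Pow B) p \<and> p \<subseteq> z}" by blast
  qed
qed

lemma tri_lattice_eq_Union_Pow: "tri_lattice U R = Union ` Pow (rimg U R ` U)"
proof -
  have "tri U R X = \<Union>(rimg U R ` X)" for X
    by (auto simp: tri_def rimg_def)
  then have "tri_lattice U R = (\<lambda>X. \<Union>(rimg U R ` X)) ` Pow U"
    unfolding tri_lattice_def by blast
  also have "\<dots> = Union ` Pow (rimg U R ` U)"
    by (auto simp: image_comp[symmetric] subset_image_iff)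
  finally show ?thesis .
qed

theorem mainTheorem17:
  fixes U :: "'a set" and R :: "('a \<times> 'a) set"
  assumes "R \<subseteq> U \<times> U"
  shows "(spatial (tri_lattice U R) \<and> completely_distributive (tri_lattice U R)) \<longleftrightarrow>
         (\<forall>x\<in>U. \<exists>S\<subseteq>U. rimg U R x = (\<Union>y\<in>S. rimg U R y) \<and>
                        (\<forall>y\<in>S. completely_join_prime (tri_lattice U R) (rimg U R y)))"
proof -
  let ?L = "tri_lattice U R"
  have "spatial ?L \<and> completely_distributive ?L \<longleftrightarrow>
      (\<forall>x\<in>U. rimg U R x = \<Union>{c\<in>rimg U R ` U. c \<subseteq> rimg U R x \<and> completely_join_prime ?L c})"
    unfolding tri_lattice_eq_Union_Pow
    by (simp add: spatial_distributive_iff_prime_generated[OF union_closed_Union_Pow]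
        prime_generated_Union_Pow_iff)
  also have "\<dots> \<longleftrightarrow> (\<forall>x\<in>U. \<exists>S\<subseteq>U. rimg U R x = (\<Union>y\<in>S. rimg U R y) \<and>
                        (\<forall>y\<in>S. completely_join_prime ?L (rimg U R y)))"
  proof (intro ball_cong refl iffI)
    fix x
    assume "rimg U R x = \<Union>{c\<in>rimg U R ` U. c \<subseteq> rimg U R x \<and> completely_join_prime ?L c}"
    then show "\<exists>S\<subseteq>U. rimg U R x = (\<Union>y\<in>S. rimg U R y) \<and>
                        (\<forall>y\<in>S. completely_join_prime ?L (rimg U R y))"
      by (intro exI[of _ "{y\<in>U. rimg U R y \<subseteq> rimg U R x \<and> completely_join_prime ?L (rimg U R y)}"])
        blast
  next
    fix x
    assume "\<exists>S\<subseteq>U. rimg U R x = (\<Union>y\<in>S. rimg U R y) \<and>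
                        (\<forall>y\<in>S. completely_join_prime ?L (rimg U R y))"
    then show "rimg U R x = \<Union>{c\<in>rimg U R ` U. c \<subseteq> rimg U R x \<and> completely_join_prime ?L c}"
      by blast
  qed
  finally show ?thesis .
qed

end
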